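(* Let $2\le d\leq n+1$ and $0<t<t_{n,d}=\frac{d}{n+1}$. Then every point of $Z_1\cup Z_2$ is GIT$_t$-unstable. In particular, $\big((H_{n,d}\times H_{n,1})\setminus(Z_1\cup Z_2)\big)^{ss}_t=(H_{n,d}\times H_{n,1})^{ss}_t$.
   Context: $H_{n,d}=\mathbb P(H^0(\mathbb P^{n+1},\mathcal O(d)))$, $H_{n,1}$ the space of hyperplanes of $\mathbb P^{n+1}$; $G=\mathrm{SL}(n+2,\mathbb C)$ acts naturally on $H_{n,d}\times H_{n,1}$. For $a,b>0$ let $\mathcal O(a,b)=\pi_1^*\mathcal O_{H_{n,d}}(a)\otimes\pi_2^*\mathcal O_{H_{n,1}}(b)$ with its natural $G$-linearisation; for rational $t=b/a>0$, GIT$_t$-(semi)stability means GIT (semi)stability with respect to $\mathcal O(a,b)$, and $(\cdot)^{ss}_t$ denotes the GIT$_t$-semistable locus. $Z_1$ is the locus of $(p,l)$ with $\mathrm{Supp}\{l=0\}\subseteq\mathrm{Supp}\{p=0\}$; $Z_2$ is the locus of $(p,l)$ such that, with $X=\{p=0\}$, $H=\{l=0\}$, there is a hyperplane $H'\ne H$ with $X\cap H=X\cap H'$. *)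

theory Defs
  imports "HOL-Analysis.Analysis"
begin

text \<open>Variables x_0..x_{n+1} of P^{n+1} are indexed by a finite type 'v with CARD('v) = n+2.
  A point of P^{n+1} is represented by a vector in complex^'v (the zero vector is harmless below).\<close>

definition monoms :: "nat \<Rightarrow> ('v::finite \<Rightarrow> nat) set" where
  "monoms d = {m. sum m UNIV = d}"

definition hom_poly :: "nat \<Rightarrow> (complex^'v::finite \<Rightarrow> complex) \<Rightarrow> bool" where
  "hom_poly d f \<longleftrightarrow> (\<exists>c :: ('v \<Rightarrow> nat) \<Rightarrow> complex.
      f = (\<lambda>x. \<Sum>m\<in>monoms d. c m * (\<Prod>i\<in>UNIV. (x $ i) ^ m i)))"

definition act :: "complex^'v^'v \<Rightarrow> (complex^'v::finite \<Rightarrow> complex) \<Rightarrow> (complex^'v \<Rightarrow> complex)" where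
  "act g f = (\<lambda>x. f (matrix_inv g *v x))"

text \<open>Polynomial functions on the space of pairs (p,l): the algebra generated by constants
  and the linear coordinate functionals (evaluations, which span the dual spaces).\<close>
inductive_set polyfun :: "(((complex^'v::finite \<Rightarrow> complex) \<times> (complex^'v \<Rightarrow> complex)) \<Rightarrow> complex) set"
where
  pf_const: "(\<lambda>_. c) \<in> polyfun"
| pf_ev1: "(\<lambda>(f, l). f x) \<in> polyfun"
| pf_ev2: "(\<lambda>(f, l). l x) \<in> polyfun"
| pf_add: "F \<in> polyfun \<Longrightarrow> G \<in> polyfun \<Longrightarrow> (\<lambda>z. F z + G z) \<in> polyfun"
| pf_mult: "F \<in> polyfun \<Longrightarrow> G \<in> polyfun \<Longrightarrow> (\<lambda>z. F z * G z) \<in> polyfun"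

text \<open>Bihomogeneous of bidegree (A,B) on V_d \<times> V_1: a section of O(A,B) on H_{n,d} \<times> H_{n,1}.\<close>
definition bihom :: "nat \<Rightarrow> nat \<Rightarrow> nat \<Rightarrow>
    (((complex^'v::finite \<Rightarrow> complex) \<times> (complex^'v \<Rightarrow> complex)) \<Rightarrow> complex) \<Rightarrow> bool" where
  "bihom d A B F \<longleftrightarrow> (\<forall>f l (s::complex) (u::complex). hom_poly d f \<longrightarrow> hom_poly 1 l \<longrightarrow>
      F (\<lambda>x. s * f x, \<lambda>x. u * l x) = s ^ A * u ^ B * F (f, l))"

definition sl_invariant :: "nat \<Rightarrow>
    (((complex^'v::finite \<Rightarrow> complex) \<times> (complex^'v \<Rightarrow> complex)) \<Rightarrow> complex) \<Rightarrow> bool" where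
  "sl_invariant d F \<longleftrightarrow> (\<forall>(g::complex^'v^'v) f l. det g = 1 \<longrightarrow> hom_poly d f \<longrightarrow> hom_poly 1 l \<longrightarrow>
      F (act g f, act g l) = F (f, l))"

definition git_semistable_ab :: "nat \<Rightarrow> nat \<Rightarrow> nat \<Rightarrow>
    (complex^'v::finite \<Rightarrow> complex) \<Rightarrow> (complex^'v \<Rightarrow> complex) \<Rightarrow> bool" where
  "git_semistable_ab d a b p l \<longleftrightarrow> (\<exists>k>0. \<exists>F\<in>polyfun.
      bihom d (k * a) (k * b) F \<and> sl_invariant d F \<and> F (p, l) \<noteq> 0)"

definition git_t_semistable :: "nat \<Rightarrow> rat \<Rightarrow>
    (complex^'v::finite \<Rightarrow> complex) \<Rightarrow> (complex^'v \<Rightarrow> complex) \<Rightarrow> bool" where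
  "git_t_semistable d t p l \<longleftrightarrow> (\<exists>a b::nat. 0 < a \<and> 0 < b \<and> t = of_nat b / of_nat a \<and>
      git_semistable_ab d a b p l)"

definition is_pt :: "nat \<Rightarrow> (complex^'v::finite \<Rightarrow> complex) \<Rightarrow> (complex^'v \<Rightarrow> complex) \<Rightarrow> bool" where
  "is_pt d p l \<longleftrightarrow> hom_poly d p \<and> p \<noteq> (\<lambda>_. 0) \<and> hom_poly 1 l \<and> l \<noteq> (\<lambda>_. 0)"

definition Z1 :: "(complex^'v::finite \<Rightarrow> complex) \<Rightarrow> (complex^'v \<Rightarrow> complex) \<Rightarrow> bool" where
  "Z1 p l \<longleftrightarrow> (\<forall>x. l x = 0 \<longrightarrow> p x = 0)"

definition Z2 :: "(complex^'v::finite \<Rightarrow> complex) \<Rightarrow> (complex^'v \<Rightarrow> complex) \<Rightarrow> bool" where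
  "Z2 p l \<longleftrightarrow> (\<exists>l'. hom_poly 1 l' \<and> l' \<noteq> (\<lambda>_. 0) \<and> (\<forall>c. l' \<noteq> (\<lambda>x. c * l x)) \<and>
      {x. p x = 0 \<and> l x = 0} = {x. p x = 0 \<and> l' x = 0})"

end

(* After a linear change of coordinates a point (p, l) of Z1 or Z2 has l = x0 and p = C x1^d on the
   hyperplane x0 = 0: for Z1 with C = 0, and for Z2 because on every line parallel to the x1-axis
   inside x0 = 0 the restriction of p is a polynomial of degree d whose only root is 0.
   Along the one-parameter subgroup diag(s^n, 1, 1/s, ..., 1/s) the form l tends to 0, while p
   converges as s -> 0, since a monomial containing x0 gains weight at least n + 1 - d >= 0.
   An invariant F of bidegree (A, B) is constant on orbits and continuous, so
   u^B F(p, l) = F(p, u l) = F(lim p, 0) for every u, and B > 0 forces F(p, l) = 0. *)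

theory Submission
  imports Defs "HOL-Computational_Algebra.Fundamental_Theorem_Algebra"
begin

section \<open>Homogeneous forms\<close>

abbreviation monomial :: "('v::finite \<Rightarrow> nat) \<Rightarrow> complex^'v \<Rightarrow> complex" where
  "monomial m x \<equiv> \<Prod>i\<in>UNIV. (x $ i) ^ m i"

lemma finite_monoms: "finite (monoms d :: ('v::finite \<Rightarrow> nat) set)"
proof (rule finite_subset)
  show "monoms d \<subseteq> Pi\<^sub>E (UNIV::'v set) (\<lambda>_. {..d})"
    unfolding monoms_def PiE_UNIV_domain by (auto intro!: member_le_sum)
qed (rule finite_PiE, auto)

lemma monoms_le: "m \<in> monoms d \<Longrightarrow> m k \<le> d"
  unfolding monoms_def using member_le_sum[of k UNIV m] by simp

lemma monoms_eq_degree_iff: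
  assumes "m \<in> monoms d"
  shows "m k = d \<longleftrightarrow> (\<forall>i. i \<noteq> k \<longrightarrow> m i = 0)"
proof -
  have "sum m UNIV = m k + sum m (UNIV - {k})"
    by (simp add: sum.remove)
  then have "d = m k + sum m (UNIV - {k})"
    using assms by (simp add: monoms_def)
  then show ?thesis by auto
qed

lemma hom_poly_zero: "hom_poly d (\<lambda>x. 0)"
  unfolding hom_poly_def by (rule exI[of _ "\<lambda>_. 0"]) simp

lemma hom_poly_add:
  assumes "hom_poly d f" "hom_poly d g"
  shows "hom_poly d (\<lambda>x. f x + g x)"
proof -
  obtain c1 c2 where "f = (\<lambda>x. \<Sum>m\<in>monoms d. c1 m * monomial m x)"
    "g = (\<lambda>x. \<Sum>m\<in>monoms d. c2 m * monomial m x)"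
    using assms unfolding hom_poly_def by blast
  then show ?thesis unfolding hom_poly_def
    by (intro exI[of _ "\<lambda>m. c1 m + c2 m"]) (simp add: sum.distrib distrib_right)
qed

lemma hom_poly_cmult:
  assumes "hom_poly d f"
  shows "hom_poly d (\<lambda>x. a * f x)"
proof -
  obtain c where "f = (\<lambda>x. \<Sum>m\<in>monoms d. c m * monomial m x)"
    using assms unfolding hom_poly_def by blast
  then show ?thesis unfolding hom_poly_def
    by (intro exI[of _ "\<lambda>m. a * c m"]) (simp add: sum_distrib_left mult.assoc)
qed

lemma hom_poly_sum: "(\<And>i. i \<in> I \<Longrightarrow> hom_poly d (f i)) \<Longrightarrow> hom_poly d (\<lambda>x. \<Sum>i\<in>I. f i x)"
  by (induction I rule: infinite_finite_induct) (simp_all add: hom_poly_zero hom_poly_add)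

lemma hom_poly_one: "hom_poly 0 (\<lambda>x::complex^'v::finite. 1)"
proof -
  have "monoms 0 = {(\<lambda>_. 0) :: 'v \<Rightarrow> nat}" unfolding monoms_def by auto
  then show ?thesis unfolding hom_poly_def by (intro exI[of _ "\<lambda>_. 1"]) simp
qed

lemma hom_poly_mult:
  assumes "hom_poly a f" "hom_poly b g"
  shows "hom_poly (a + b) (\<lambda>x::complex^'v::finite. f x * g x)"
proof -
  obtain c1 where c1: "f = (\<lambda>x. \<Sum>m\<in>monoms a. c1 m * monomial m x)"
    using assms(1) hom_poly_def by blast
  obtain c2 where c2: "g = (\<lambda>x. \<Sum>m\<in>monoms b. c2 m * monomial m x)"
    using assms(2) hom_poly_def by blast
  define S where "S = (monoms a :: ('v \<Rightarrow> nat) set) \<times> (monoms b :: ('v \<Rightarrow> nat) set)"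
  define plus where "plus q = (\<lambda>i. fst q i + snd q i)" for q :: "('v \<Rightarrow> nat) \<times> ('v \<Rightarrow> nat)"
  define C where "C m = (\<Sum>q\<in>{q \<in> S. plus q = m}. c1 (fst q) * c2 (snd q))" for m
  have plus_S: "plus ` S \<subseteq> monoms (a + b)"
    unfolding S_def plus_def monoms_def by (auto simp: sum.distrib)
  have "f x * g x = (\<Sum>m\<in>monoms (a + b). C m * monomial m x)" for x
  proof -
    have "f x * g x = (\<Sum>q\<in>S. c1 (fst q) * c2 (snd q) * monomial (plus q) x)"
      unfolding c1 c2 S_def plus_def sum_product sum.cartesian_product
      by (rule sum.cong) (auto simp: mult_ac power_add prod.distrib)
    also have "\<dots> = (\<Sum>m\<in>monoms (a + b). \<Sum>q\<in>{q \<in> S. plus q = m}.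
                        c1 (fst q) * c2 (snd q) * monomial (plus q) x)"
      using plus_S by (intro sum.group[symmetric]) (auto simp: S_def finite_monoms)
    also have "\<dots> = (\<Sum>m\<in>monoms (a + b). C m * monomial m x)"
      unfolding C_def sum_distrib_right by (intro sum.cong refl) auto
    finally show ?thesis .
  qed
  then show ?thesis unfolding hom_poly_def by (intro exI[of _ C]) auto
qed

lemma hom_poly_prod:
  "finite I \<Longrightarrow> (\<And>i. i \<in> I \<Longrightarrow> hom_poly (e i) (f i)) \<Longrightarrow>
     hom_poly (\<Sum>i\<in>I. e i) (\<lambda>x::complex^'v::finite. \<Prod>i\<in>I. f i x)"
  by (induction I rule: finite_induct) (simp_all add: hom_poly_one hom_poly_mult)

lemma hom_poly_power: "hom_poly a f \<Longrightarrow> hom_poly (k * a) (\<lambda>x. f x ^ k)"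
  by (induction k) (simp_all add: hom_poly_one hom_poly_mult)

lemma monomial_unit_exponent: "monomial (\<lambda>i. if i = k then 1 else 0) x = x $ k"
  by (simp add: if_distrib[of "power _"] cong: if_cong)

lemma inj_unit_exponent: "inj (\<lambda>k::'v. \<lambda>i. if i = k then 1 else (0::nat))"
proof (rule injI)
  fix a b :: 'v
  assume "(\<lambda>i. if i = a then 1 else (0::nat)) = (\<lambda>i. if i = b then 1 else 0)"
  then have "(if a = a then 1 else (0::nat)) = (if a = b then 1 else 0)" by (rule fun_cong)
  then show "a = b" by (simp split: if_splits)
qed

lemma monoms_one_sum:
  fixes x :: "complex^'v::finite"
  shows "(\<Sum>m\<in>monoms 1. c m * monomial m x) = (\<Sum>k\<in>UNIV. c (\<lambda>i. if i = k then 1 else 0) * x $ k)"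
proof -
  have "monoms 1 = range (\<lambda>k. \<lambda>i::'v. if i = k then 1 else (0::nat))"
  proof (intro antisym subsetI)
    fix m :: "'v \<Rightarrow> nat" assume m: "m \<in> monoms 1"
    then have "sum m UNIV \<noteq> 0" by (simp add: monoms_def)
    then obtain k where "m k \<noteq> 0" using sum.neutral[of UNIV m] by auto
    then have "m k = 1" using monoms_le[OF m, of k] by simp
    then have "m = (\<lambda>i. if i = k then 1 else 0)"
      using monoms_eq_degree_iff[OF m, of k] by (simp add: fun_eq_iff)
    then show "m \<in> range (\<lambda>k. \<lambda>i. if i = k then 1 else 0)" by blast
  qed (auto simp: monoms_def)
  then show ?thesis by (simp add: sum.reindex inj_unit_exponent monomial_unit_exponent)
qed

lemma hom_poly_one_iff:
  "hom_poly 1 l \<longleftrightarrow> (\<exists>a::complex^'v::finite. l = (\<lambda>x. \<Sum>i\<in>UNIV. a $ i * x $ i))"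
proof
  assume "hom_poly 1 l"
  then obtain c where "l = (\<lambda>x. \<Sum>m\<in>monoms 1. c m * monomial m x)"
    unfolding hom_poly_def by blast
  then have "l = (\<lambda>x. \<Sum>k\<in>UNIV. c (\<lambda>i. if i = k then 1 else 0) * x $ k)"
    by (simp only: monoms_one_sum)
  then show "\<exists>a. l = (\<lambda>x. \<Sum>i\<in>UNIV. a $ i * x $ i)"
    by (intro exI[of _ "\<chi> k. c (\<lambda>i. if i = k then 1 else 0)"]) simp
next
  assume "\<exists>a. l = (\<lambda>x. \<Sum>i\<in>UNIV. a $ i * x $ i)"
  then obtain a :: "complex^'v" where l: "l = (\<lambda>x. \<Sum>i\<in>UNIV. a $ i * x $ i)" ..
  define c where "c m = a $ inv (\<lambda>k. \<lambda>i. if i = k then 1 else 0) m" for m :: "'v \<Rightarrow> nat"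
  have "c (\<lambda>i. if i = k then 1 else 0) = a $ k" for k
    unfolding c_def by (simp add: inv_f_f[OF inj_unit_exponent])
  then show "hom_poly 1 l"
    unfolding hom_poly_def l monoms_one_sum by (intro exI[of _ c]) simp
qed

lemma hom_poly_compose_linear:
  assumes "hom_poly d f"
  shows "hom_poly d (\<lambda>x. f ((A::complex^'v::finite^'v) *v x))"
proof -
  obtain c where c: "f = (\<lambda>x. \<Sum>m\<in>monoms d. c m * monomial m x)"
    using assms hom_poly_def by blast
  have "hom_poly d (\<lambda>x. monomial m (A *v x))" if "m \<in> monoms d" for m
  proof -
    have "hom_poly 1 (\<lambda>x. (A *v x) $ i)" for i
      unfolding hom_poly_one_iff matrix_vector_mult_def by (intro exI[of _ "A $ i"]) simp
    then have "hom_poly (\<Sum>i\<in>UNIV. m i * 1) (\<lambda>x. monomial m (A *v x))"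
      by (intro hom_poly_prod hom_poly_power) auto
    with that show ?thesis by (simp add: monoms_def)
  qed
  then show ?thesis unfolding c by (intro hom_poly_sum hom_poly_cmult)
qed

lemma monomial_scale_coordinates:
  "monomial m (\<chi> i. s ^ w i * y $ i) = s ^ (\<Sum>i\<in>UNIV. w i * m i) * monomial m y"
  by (simp add: power_mult_distrib prod.distrib power_mult[symmetric] power_sum mult.commute)

lemma hom_poly_homogeneous:
  assumes "hom_poly d f"
  shows "f (s *s x) = s ^ d * f x"
proof -
  obtain c where c: "f = (\<lambda>x. \<Sum>m\<in>monoms d. c m * monomial m x)"
    using assms hom_poly_def by blast
  have "s *s x = (\<chi> i. s ^ 1 * x $ i)" by (simp add: vec_eq_iff)
  then have "monomial m (s *s x) = s ^ d * monomial m x" if "m \<in> monoms d" for m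
    using that by (simp only: monomial_scale_coordinates) (simp add: monoms_def)
  then show ?thesis unfolding c sum_distrib_left by (intro sum.cong) (auto simp: mult_ac)
qed

lemma monomial_axis:
  assumes "m \<in> monoms d"
  shows "monomial m (axis k 1) = (if m k = d then 1 else 0)"
proof -
  have "monomial m (axis k 1) = (\<Prod>i\<in>UNIV - {k}. (axis k 1 $ i) ^ m i)"
    by (simp add: prod.remove[of UNIV k] axis_def)
  also have "\<dots> = (\<Prod>i\<in>UNIV - {k}. (0::complex) ^ m i)"
    by (intro prod.cong) (auto simp: axis_def)
  finally show ?thesis using assms by (auto simp: monoms_eq_degree_iff)
qed

lemma monomial_sum_split_coordinate:
  fixes z :: "complex^'v::finite"
  assumes "finite M"
  shows "(\<Sum>m\<in>M. c m * monomial m z) = (\<Sum>m\<in>M. c m * monomial m (\<chi> i. if i = k then 0 else z $ i))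
           + (\<Sum>m\<in>{m \<in> M. m k \<noteq> 0}. c m * monomial m z)"
proof -
  have split: "c m * monomial m z = c m * monomial m (\<chi> i. if i = k then 0 else z $ i)
          + (if m k \<noteq> 0 then c m * monomial m z else 0)" for m
  proof (cases "m k = 0")
    case True
    then have "monomial m (\<chi> i. if i = k then 0 else z $ i) = monomial m z"
      by (intro prod.cong) auto
    then show ?thesis using True by simp
  next
    case False
    then have "monomial m (\<chi> i. if i = k then 0 else z $ i) = 0"
      by (intro prod_zero[of UNIV]) (auto intro: bexI[of _ k])
    then show ?thesis using False by simp
  qed
  show ?thesis
    unfolding sum.inter_filter[OF assms] sum.distrib[symmetric] by (rule sum.cong[OF refl split])
qed

section \<open>Forms vanishing only on a coordinate hyperplane\<close>

lemma poly_with_only_root_zero: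
  fixes q :: "complex poly"
  assumes "\<And>z. poly q z = 0 \<Longrightarrow> z = 0"
  shows "poly q z = lead_coeff q * z ^ degree q"
proof (cases "q = 0")
  case False
  have "{z. poly q z = 0} = {} \<or> {z. poly q z = 0} = {0}" using assms by blast
  then obtain k where k: "q = smult (lead_coeff q) ([:0, 1:] ^ k)"
  proof
    assume "{z. poly q z = 0} = {}"
    then show ?thesis using complex_poly_decompose[of q] that[of 0] by simp
  next
    assume "{z. poly q z = 0} = {0}"
    then show ?thesis using complex_poly_decompose[of q] that[of "order 0 q"] by simp
  qed
  then have "degree q = k" using False by (metis degree_linear_power degree_smult_eq smult_0_left)
  then show ?thesis by (subst k) simp
qed simp

lemma hom_poly_restrict_coordinate:
  fixes p :: "complex^'v::finite \<Rightarrow> complex"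
  assumes "hom_poly d p"
  obtains q where "degree q \<le> d" "coeff q d = p (axis k 1)"
    "\<And>\<tau>. poly q \<tau> = p (\<chi> i. if i = k then \<tau> else v $ i)"
proof -
  obtain c where c: "p = (\<lambda>x. \<Sum>m\<in>monoms d. c m * monomial m x)"
    using assms hom_poly_def by blast
  define R where "R m = (\<Prod>i\<in>UNIV - {k}. (v $ i) ^ m i)" for m :: "'v \<Rightarrow> nat"
  define q where "q = (\<Sum>m\<in>monoms d. monom (c m * R m) (m k))"
  have "degree q \<le> d"
    unfolding q_def by (intro degree_sum_le finite_monoms order.trans[OF degree_monom_le] monoms_le)
  moreover have "R m = 1" if "m \<in> monoms d" "m k = d" for m
    using that unfolding R_def by (intro prod.neutral) (auto simp: monoms_eq_degree_iff)
  then have "coeff q d = p (axis k 1)"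
    unfolding q_def c coeff_sum coeff_monom
    by (intro sum.cong refl) (auto simp: monomial_axis)
  moreover have "poly q \<tau> = p (\<chi> i. if i = k then \<tau> else v $ i)" for \<tau>
  proof -
    have "monomial m (\<chi> i. if i = k then \<tau> else v $ i) = \<tau> ^ m k * R m" for m
      unfolding R_def by (simp add: prod.remove[of UNIV k])
    then show ?thesis
      unfolding q_def c poly_sum poly_monom by (simp add: mult_ac)
  qed
  ultimately show ?thesis using that by blast
qed

lemma hom_poly_eq_power_on_hyperplane:
  fixes p :: "complex^'v::finite \<Rightarrow> complex"
  assumes p: "hom_poly d p" and k: "k0 \<noteq> k1"
    and zeros: "\<And>v. v $ k0 = 0 \<Longrightarrow> p v = 0 \<Longrightarrow> v $ k1 = 0"
    and v: "v $ k0 = 0"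
  shows "p v = p (axis k1 1) * (v $ k1) ^ d"
proof -
  define line where "line \<tau> = (\<chi> i. if i = k1 then \<tau> else v $ i)" for \<tau>
  obtain q where q: "degree q \<le> d" "coeff q d = p (axis k1 1)" "\<And>\<tau>. poly q \<tau> = p (line \<tau>)"
    using hom_poly_restrict_coordinate[OF p] unfolding line_def by blast
  have "p (axis k1 1) \<noteq> 0"
    using zeros[of "axis k1 1"] k by (auto simp: axis_def)
  then have "degree q = d" using q(1,2) by (simp add: le_antisym le_degree)
  moreover have "\<tau> = 0" if "poly q \<tau> = 0" for \<tau>
    using zeros[of "line \<tau>"] that k v by (simp add: q(3) line_def)
  ultimately have "poly q \<tau> = p (axis k1 1) * \<tau> ^ d" for \<tau>
    using poly_with_only_root_zero q(2) by metis
  moreover have "line (v $ k1) = v" by (simp add: line_def vec_eq_iff)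
  ultimately show ?thesis using q(3) by metis
qed

section \<open>Linear changes of coordinates\<close>

lemma
  fixes A :: "'a::semiring_1^'n^'m"
  assumes "invertible A"
  shows matrix_inv_right: "A ** matrix_inv A = mat 1"
    and matrix_inv_left: "matrix_inv A ** A = mat 1"
  using someI_ex[OF assms[unfolded invertible_def]] unfolding matrix_inv_def by auto

lemma invertible_matrix_inv:
  assumes "invertible A"
  shows "invertible (matrix_inv A)"
  unfolding invertible_def using matrix_inv_left[OF assms] matrix_inv_right[OF assms] by blast

lemma matrix_inv_unique:
  fixes A :: "'a::semiring_1^'n^'n"
  assumes "A ** B = mat 1" "B ** A = mat 1"
  shows "matrix_inv A = B"
proof -
  have "invertible A" using assms invertible_def by blast
  have "matrix_inv A = matrix_inv A ** (A ** B)" by (simp add: assms(1))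
  also have "\<dots> = (matrix_inv A ** A) ** B" by (simp add: matrix_mul_assoc)
  finally show ?thesis by (simp add: matrix_inv_left[OF \<open>invertible A\<close>])
qed

lemma act_matrix_inv:
  fixes A :: "complex^'v::finite^'v"
  assumes "invertible A"
  shows "act (matrix_inv A) f = (\<lambda>x. f (A *v x))"
  unfolding act_def
  using matrix_inv_unique[OF matrix_inv_left[OF assms] matrix_inv_right[OF assms]] by simp

lemma det_matrix_inv:
  fixes A :: "'a::comm_ring_1^'n^'n"
  assumes "invertible A"
  shows "det (matrix_inv A) * det A = 1"
  using det_mul[of "matrix_inv A" A] by (simp add: matrix_inv_left[OF assms])

lemma homogeneous_2x2_system_trivial:
  fixes a b c e x y :: "'a::field"
  assumes "a * x + b * y = 0" "c * x + e * y = 0" "a * e - b * c \<noteq> 0"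
  shows "x = 0 \<and> y = 0"
proof -
  have "(a * e - b * c) * x = e * (a * x + b * y) - b * (c * x + e * y)"
    "(a * e - b * c) * y = a * (c * x + e * y) - c * (a * x + b * y)"
    by (simp_all add: algebra_simps)
  then show ?thesis using assms by simp
qed

lemma coordinates_from_two_forms:
  fixes a a' :: "complex^'v::finite"
  assumes k: "k0 \<noteq> k1" and minor: "a $ k0 * a' $ k1 - a $ k1 * a' $ k0 \<noteq> 0"
  obtains P :: "complex^'v^'v" where "invertible P"
    "\<And>v. (\<Sum>j\<in>UNIV. a $ j * (P *v v) $ j) = v $ k0"
    "\<And>v. (\<Sum>j\<in>UNIV. a' $ j * (P *v v) $ j) = v $ k1"
proof -
  define Q :: "complex^'v^'v"
    where "Q = (\<chi> i. if i = k0 then a else if i = k1 then a' else axis i 1)"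
  have Q: "(Q *v y) $ i = (if i = k0 then (\<Sum>j\<in>UNIV. a $ j * y $ j)
      else if i = k1 then (\<Sum>j\<in>UNIV. a' $ j * y $ j) else y $ i)" for y i
    by (simp add: Q_def matrix_vector_mult_def axis_def if_distrib[of "\<lambda>x. x * _"] cong: if_cong)
  have kernel: "w = 0" if w: "Q *v w = 0" for w
  proof -
    have other: "w $ i = 0" if "i \<noteq> k0" "i \<noteq> k1" for i
      using arg_cong[OF w, of "\<lambda>u. u $ i"] that by (simp add: Q)
    have two: "(\<Sum>j\<in>UNIV. b $ j * w $ j) = b $ k0 * w $ k0 + b $ k1 * w $ k1" for b :: "complex^'v"
      using k by (subst sum.mono_neutral_right[of UNIV "{k0, k1}"]) (auto simp: other)
    have "a $ k0 * w $ k0 + a $ k1 * w $ k1 = 0" "a' $ k0 * w $ k0 + a' $ k1 * w $ k1 = 0"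
      using arg_cong[OF w, of "\<lambda>u. u $ k0"] arg_cong[OF w, of "\<lambda>u. u $ k1"] k
      by (simp_all add: Q two)
    then have "w $ k0 = 0 \<and> w $ k1 = 0"
      using minor by (rule homogeneous_2x2_system_trivial)
    then show ?thesis using other by (metis vec_eq_iff zero_index)
  qed
  have "inj ((*v) Q)"
  proof (rule injI)
    fix y z assume "Q *v y = Q *v z"
    then show "y = z" using kernel[of "y - z"] by (simp add: matrix_vector_mult_diff_distrib)
  qed
  then have "invertible Q"
    using matrix_left_invertible_injective invertible_left_inverse by blast
  moreover have "Q *v (matrix_inv Q *v v) = v" for v
    by (simp add: matrix_vector_mul_assoc matrix_inv_right[OF \<open>invertible Q\<close>])
  ultimately show ?thesis
    using that[of "matrix_inv Q"] invertible_matrix_inv k by (metis Q)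
qed

lemma linear_forms_as_coordinates:
  fixes l l' :: "complex^'v::finite \<Rightarrow> complex"
  assumes l: "hom_poly 1 l" "l \<noteq> (\<lambda>_. 0)"
    and l': "hom_poly 1 l'" "\<And>c. l' \<noteq> (\<lambda>x. c * l x)"
  obtains P :: "complex^'v^'v" and k0 k1 where "invertible P" "k0 \<noteq> k1"
    "\<And>v. l (P *v v) = v $ k0" "\<And>v. l' (P *v v) = v $ k1"
proof -
  obtain a a' :: "complex^'v" where a: "l = (\<lambda>x. \<Sum>i\<in>UNIV. a $ i * x $ i)"
    and a': "l' = (\<lambda>x. \<Sum>i\<in>UNIV. a' $ i * x $ i)"
    using l(1) l'(1) unfolding hom_poly_one_iff by blast
  have "a \<noteq> 0"
  proof
    assume "a = 0"
    then have "l = (\<lambda>_. 0)" by (simp add: a)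
    with l(2) show False by simp
  qed
  then obtain k0 where k0: "a $ k0 \<noteq> 0" using vec_eq_iff[of a 0] by auto
  define \<mu> where "\<mu> = a' $ k0 / a $ k0"
  define b where "b = a' - \<mu> *s a"
  have "b \<noteq> 0"
  proof
    assume "b = 0"
    then have "a' = \<mu> *s a" by (simp add: b_def)
    then have "l' = (\<lambda>x. \<mu> * l x)" by (simp add: a a' sum_distrib_left mult.assoc)
    then show False using l'(2) by blast
  qed
  then obtain k1 where k1: "b $ k1 \<noteq> 0" using vec_eq_iff[of b 0] by auto
  have "b $ k0 = 0" using k0 by (simp add: b_def \<mu>_def)
  then have k: "k0 \<noteq> k1" using k1 by auto
  have "a $ k0 * a' $ k1 - a $ k1 * a' $ k0 = a $ k0 * b $ k1"
    using k0 by (simp add: b_def \<mu>_def field_simps)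
  then have "a $ k0 * a' $ k1 - a $ k1 * a' $ k0 \<noteq> 0" using k0 k1 by simp
  then obtain P :: "complex^'v^'v" where P: "invertible P"
    "\<And>v. (\<Sum>j\<in>UNIV. a $ j * (P *v v) $ j) = v $ k0"
    "\<And>v. (\<Sum>j\<in>UNIV. a' $ j * (P *v v) $ j) = v $ k1"
    using coordinates_from_two_forms[OF k] by blast
  show ?thesis by (rule that[OF P(1) k]) (simp_all add: a a' P(2,3))
qed

lemma exists_nonproportional_linear_form:
  fixes l :: "complex^'v::finite \<Rightarrow> complex"
  assumes "CARD('v) \<ge> 2"
  obtains l' where "hom_poly 1 l'" "\<And>c. l' \<noteq> (\<lambda>x. c * l x)"
proof -
  obtain i j :: 'v where "i \<noteq> j"
    using assms card_le_Suc0_iff_eq[of "UNIV :: 'v set"] by force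
  have coordinate: "hom_poly 1 (\<lambda>x::complex^'v. x $ k)" for k
    unfolding hom_poly_one_iff
    by (intro exI[of _ "axis k 1"]) (simp add: axis_def if_distrib[of "\<lambda>x. x * _"] cong: if_cong)
  have not_both: False if "(\<lambda>x. x $ i) = (\<lambda>x. c * l x)" "(\<lambda>x. x $ j) = (\<lambda>x. c' * l x)" for c c'
  proof -
    have "axis i 1 $ i = c * l (axis i 1)" "axis j 1 $ i = c * l (axis j 1)"
      "axis j 1 $ j = c' * l (axis j 1)"
      using that by (simp_all add: fun_eq_iff)
    then show False using \<open>i \<noteq> j\<close> by (auto simp: axis_def)
  qed
  show ?thesis
  proof (cases "\<exists>c. (\<lambda>x. x $ i) = (\<lambda>x. c * l x)")
    case True
    then show ?thesis using that[OF coordinate[of j]] not_both by blast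
  next
    case False
    then show ?thesis using that[OF coordinate[of i]] by blast
  qed
qed

lemma normal_form_on_Z:
  fixes p l :: "complex^'v::finite \<Rightarrow> complex"
  assumes card: "CARD('v) \<ge> 2" and p: "hom_poly d p"
    and l: "hom_poly 1 l" "l \<noteq> (\<lambda>_. 0)" and Z: "Z1 p l \<or> Z2 p l"
  obtains P :: "complex^'v^'v" and k0 k1 C where "invertible P" "k0 \<noteq> k1"
    "\<And>v. l (P *v v) = v $ k0" "\<And>v. v $ k0 = 0 \<Longrightarrow> p (P *v v) = C * (v $ k1) ^ d"
proof -
  obtain l' where l': "hom_poly 1 l'" "\<And>c. l' \<noteq> (\<lambda>x. c * l x)"
    and Z': "Z1 p l \<or> {x. p x = 0 \<and> l x = 0} = {x. p x = 0 \<and> l' x = 0}"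
  proof (cases "Z1 p l")
    case True
    obtain l' where "hom_poly 1 l'" "\<And>c. l' \<noteq> (\<lambda>x. c * l x)"
      using exists_nonproportional_linear_form[OF card, where l = l] by blast
    with True show ?thesis using that by blast
  next
    case False
    with Z show ?thesis using that unfolding Z2_def by blast
  qed
  obtain P :: "complex^'v^'v" and k0 k1 where P: "invertible P" "k0 \<noteq> k1"
    and lP: "\<And>v. l (P *v v) = v $ k0" and l'P: "\<And>v. l' (P *v v) = v $ k1"
    using linear_forms_as_coordinates[OF l l'] by blast
  from Z' show ?thesis
  proof
    assume "Z1 p l"
    then have "p (P *v v) = 0 * (v $ k1) ^ d" if "v $ k0 = 0" for v
      using lP that unfolding Z1_def by simp
    then show ?thesis using that P lP by blast
  next
    assume zeros: "{x. p x = 0 \<and> l x = 0} = {x. p x = 0 \<and> l' x = 0}"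
    have "v $ k1 = 0" if "v $ k0 = 0" "p (P *v v) = 0" for v
    proof -
      have "P *v v \<in> {x. p x = 0 \<and> l' x = 0}"
        unfolding zeros[symmetric] using that lP by simp
      then show ?thesis using l'P by simp
    qed
    then have "p (P *v v) = p (P *v axis k1 1) * (v $ k1) ^ d" if "v $ k0 = 0" for v
      using hom_poly_eq_power_on_hyperplane[OF hom_poly_compose_linear[OF p] P(2)] that by blast
    then show ?thesis using that P lP by blast
  qed
qed

section \<open>Invariants along degenerating orbits\<close>

lemma polyfun_tendsto:
  assumes "F \<in> polyfun"
    and "\<And>x. ((\<lambda>s. f s x) \<longlongrightarrow> f0 x) net" and "\<And>x. ((\<lambda>s. g s x) \<longlongrightarrow> g0 x) net"
  shows "((\<lambda>s. F (f s, g s)) \<longlongrightarrow> F (f0, g0)) net"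
  using assms(1)
proof (induction rule: polyfun.induct)
  case (pf_ev1 x) then show ?case using assms(2) by simp
next
  case (pf_ev2 x) then show ?case using assms(3) by simp
qed (auto intro: tendsto_add tendsto_mult)

lemma sl_invariant_vanishes_if_orbit_degenerates:
  fixes p l :: "complex^'v::finite \<Rightarrow> complex" and h :: "'s \<Rightarrow> complex^'v^'v"
  assumes F: "F \<in> polyfun" "bihom d A B F" "sl_invariant d F" and B: "B > 0"
    and p: "hom_poly d p" and l: "hom_poly 1 l"
    and net: "net \<noteq> bot" "\<forall>\<^sub>F s in net. det (h s) = 1"
    and lim_p: "\<And>x. \<exists>L. ((\<lambda>s. p (h s *v x)) \<longlongrightarrow> L) net"
    and lim_l: "\<And>x. ((\<lambda>s. l (h s *v x)) \<longlongrightarrow> 0) net"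
  shows "F (p, l) = 0"
proof -
  obtain p0 where p0: "\<And>x. ((\<lambda>s. p (h s *v x)) \<longlongrightarrow> p0 x) net"
    using choice[of "\<lambda>x L. ((\<lambda>s. p (h s *v x)) \<longlongrightarrow> L) net"] lim_p by blast
  have scaled: "u ^ B * F (p, l) = F (p0, \<lambda>_. 0)" for u :: complex
  proof -
    have ul: "hom_poly 1 (\<lambda>x. u * l x)" by (rule hom_poly_cmult[OF l])
    have "F (\<lambda>x. 1 * p x, \<lambda>x. u * l x) = 1 ^ A * u ^ B * F (p, l)"
      using F(2) p l unfolding bihom_def by blast
    then have "F (p, \<lambda>x. u * l x) = u ^ B * F (p, l)" by simp
    moreover have "F (\<lambda>x. p (h s *v x), \<lambda>x. u * l (h s *v x)) = F (p, \<lambda>x. u * l x)"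
      if "det (h s) = 1" for s
    proof -
      have "invertible (h s)" using that by (simp add: invertible_det_nz)
      then have "det (matrix_inv (h s)) = 1" using det_matrix_inv[of "h s"] that by simp
      then have "F (act (matrix_inv (h s)) p, act (matrix_inv (h s)) (\<lambda>x. u * l x))
          = F (p, \<lambda>x. u * l x)"
        using F(3) p ul unfolding sl_invariant_def by blast
      then show ?thesis by (simp add: act_matrix_inv[OF \<open>invertible (h s)\<close>])
    qed
    ultimately have "\<forall>\<^sub>F s in net. F (\<lambda>x. p (h s *v x), \<lambda>x. u * l (h s *v x)) = u ^ B * F (p, l)"
      using net(2) by (auto elim: eventually_mono)
    moreover have "((\<lambda>s. F (\<lambda>x. p (h s *v x), \<lambda>x. u * l (h s *v x))) \<longlongrightarrow> F (p0, \<lambda>_. 0)) net"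
      using polyfun_tendsto[OF F(1) p0 tendsto_mult_right_zero[OF lim_l]] .
    ultimately have "((\<lambda>s. u ^ B * F (p, l)) \<longlongrightarrow> F (p0, \<lambda>_. 0)) net"
      by (rule Lim_transform_eventually[rotated])
    then show ?thesis using net(1) tendsto_const tendsto_unique by blast
  qed
  have "(1::nat) < 2 ^ B" using B by (intro one_less_power) auto
  then have "(of_nat (2 ^ B) :: complex) \<noteq> 1" by (simp only: of_nat_eq_1_iff)
  moreover have "F (p, l) = 2 ^ B * F (p, l)" using scaled[of 1] scaled[of 2] by simp
  ultimately show ?thesis by simp
qed

section \<open>The destabilising one-parameter subgroup\<close>

text \<open>The one-parameter subgroup diag(s^n, 1, 1/s, ..., 1/s), with s^n in position k0 and 1 in
  position k1, written as 1/s times diag(s^(n+1), s, 1, ..., 1) so that its action on monomials only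
  involves natural powers of s.\<close>
definition ps_weight :: "'v \<Rightarrow> 'v \<Rightarrow> nat \<Rightarrow> 'v \<Rightarrow> nat" where
  "ps_weight k0 k1 n i = (if i = k0 then n + 1 else if i = k1 then 1 else 0)"

definition one_ps :: "'v::finite \<Rightarrow> 'v \<Rightarrow> nat \<Rightarrow> complex \<Rightarrow> complex^'v^'v" where
  "one_ps k0 k1 n s = (\<chi> i j. if i = j then s ^ ps_weight k0 k1 n i / s else 0)"

lemma one_ps_mult: "one_ps k0 k1 n s *v y = (1 / s) *s (\<chi> i. s ^ ps_weight k0 k1 n i * y $ i)"
  by (simp add: one_ps_def matrix_vector_mult_def vec_eq_iff if_distrib[of "\<lambda>x. x * _"] cong: if_cong)

lemma det_one_ps:
  assumes card: "CARD('v::finite) = n + 2" and k: "(k0::'v) \<noteq> k1" and s: "s \<noteq> 0"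
  shows "det (one_ps k0 k1 n s) = 1"
proof -
  have "(\<Sum>i\<in>UNIV. ps_weight k0 k1 n i) = (\<Sum>i\<in>UNIV. (if i = k0 then n + 1 else 0) + (if i = k1 then 1 else 0))"
    using k by (intro sum.cong) (auto simp: ps_weight_def)
  then have "(\<Sum>i\<in>UNIV. ps_weight k0 k1 n i) = CARD('v)"
    using card by (simp add: sum.distrib)
  then have "(\<Prod>i\<in>UNIV. s ^ ps_weight k0 k1 n i) = s ^ CARD('v)"
    by (simp only: power_sum[symmetric])
  then show ?thesis using s
    by (simp add: one_ps_def det_diagonal prod_dividef)
qed

lemma one_ps_coordinate_tendsto_zero:
  assumes "1 \<le> n"
  shows "((\<lambda>s. (one_ps k0 k1 n s *v y) $ k0) \<longlongrightarrow> 0) (at 0)"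
proof -
  have "(one_ps k0 k1 n s *v y) $ k0 = s ^ n * y $ k0" if "s \<noteq> 0" for s
    using that by (simp add: one_ps_mult ps_weight_def)
  then have "\<forall>\<^sub>F s in at 0. s ^ n * y $ k0 = (one_ps k0 k1 n s *v y) $ k0"
    by (auto simp: eventually_at_filter)
  moreover have "((\<lambda>s. s ^ n * y $ k0) \<longlongrightarrow> 0) (at (0::complex))"
    using assms by (intro tendsto_eq_intros) auto
  ultimately show ?thesis by (rule Lim_transform_eventually[rotated])
qed

lemma one_ps_limit:
  fixes p :: "complex^'v::finite \<Rightarrow> complex"
  assumes p: "hom_poly d p" and k: "k0 \<noteq> k1" and d: "d \<le> n + 1"
    and on_hyperplane: "\<And>v. v $ k0 = 0 \<Longrightarrow> p v = C * (v $ k1) ^ d"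
  shows "\<exists>L. ((\<lambda>s. p (one_ps k0 k1 n s *v y)) \<longlongrightarrow> L) (at 0)"
proof -
  obtain c where c: "p = (\<lambda>x. \<Sum>m\<in>monoms d. c m * monomial m x)"
    using p hom_poly_def by blast
  define w where "w = ps_weight k0 k1 n"
  define e where "e m = (\<Sum>i\<in>UNIV. w i * m i)" for m
  define M where "M = {m \<in> monoms d. m k0 \<noteq> 0}"
  define G where "G s = C * (y $ k1) ^ d + (\<Sum>m\<in>M. c m * s ^ (e m - d) * monomial m y)" for s
  have e: "d \<le> e m" if "m \<in> M" for m
  proof -
    have "1 \<le> m k0" using that by (simp add: M_def)
    then have "(n + 1) * 1 \<le> (n + 1) * m k0" by (rule mult_le_mono2)
    with d have "d \<le> (n + 1) * m k0" by simp
    also have "\<dots> = w k0 * m k0" by (simp add: w_def ps_weight_def)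
    also have "\<dots> \<le> e m" unfolding e_def by (rule member_le_sum) auto
    finally show ?thesis .
  qed
  have "p (one_ps k0 k1 n s *v y) = G s" if s: "s \<noteq> 0" for s
  proof -
    define E where "E = (\<chi> i. s ^ w i * y $ i)"
    have "p (one_ps k0 k1 n s *v y) = (1 / s) ^ d * p E"
      by (simp add: one_ps_mult E_def w_def hom_poly_homogeneous[OF p])
    also have "p E = p (\<chi> i. if i = k0 then 0 else E $ i) + (\<Sum>m\<in>M. c m * monomial m E)"
      unfolding c M_def by (rule monomial_sum_split_coordinate[OF finite_monoms])
    also have "p (\<chi> i. if i = k0 then 0 else E $ i) = C * (s * y $ k1) ^ d"
      using k by (subst on_hyperplane) (simp_all add: E_def w_def ps_weight_def)
    also have "(\<Sum>m\<in>M. c m * monomial m E) = (\<Sum>m\<in>M. c m * s ^ e m * monomial m y)"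
      unfolding E_def e_def monomial_scale_coordinates by (simp add: mult.assoc)
    also have "(1 / s) ^ d * (C * (s * y $ k1) ^ d + (\<Sum>m\<in>M. c m * s ^ e m * monomial m y)) = G s"
    proof -
      have "(1 / s) ^ d * (c m * s ^ e m * monomial m y) = c m * s ^ (e m - d) * monomial m y"
        if "m \<in> M" for m
      proof -
        have "s ^ e m = s ^ (e m - d) * s ^ d" using e[OF that] by (simp flip: power_add)
        then show ?thesis using s by (simp add: field_simps)
      qed
      then have "(1 / s) ^ d * (\<Sum>m\<in>M. c m * s ^ e m * monomial m y)
          = (\<Sum>m\<in>M. c m * s ^ (e m - d) * monomial m y)"
        unfolding sum_distrib_left by (rule sum.cong[OF refl])
      moreover have "(1 / s) ^ d * (C * (s * y $ k1) ^ d) = C * (y $ k1) ^ d"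
        using s by (simp add: field_simps)
      ultimately show ?thesis by (simp only: distrib_left G_def)
    qed
    finally show ?thesis .
  qed
  then have "\<forall>\<^sub>F s in at 0. G s = p (one_ps k0 k1 n s *v y)"
    by (auto simp: eventually_at_filter)
  moreover have "(G \<longlongrightarrow> G 0) (at 0)"
    unfolding G_def by (intro tendsto_intros)
  ultimately show ?thesis by (blast intro: Lim_transform_eventually)
qed

lemma sl_invariant_vanishes_on_Z:
  fixes p l :: "complex^'v::finite \<Rightarrow> complex"
  assumes card: "CARD('v) = n + 2" and n: "1 \<le> n" and d: "d \<le> n + 1"
    and p: "hom_poly d p" and l: "hom_poly 1 l" "l \<noteq> (\<lambda>_. 0)" and Z: "Z1 p l \<or> Z2 p l"
    and F: "F \<in> polyfun" "bihom d A B F" "sl_invariant d F" and B: "B > 0"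
  shows "F (p, l) = 0"
proof -
  have "CARD('v) \<ge> 2" using card by simp
  then obtain P :: "complex^'v^'v" and k0 k1 C where P: "invertible P" "k0 \<noteq> k1"
    and lP: "\<And>v. l (P *v v) = v $ k0" and pP: "\<And>v. v $ k0 = 0 \<Longrightarrow> p (P *v v) = C * (v $ k1) ^ d"
    using normal_form_on_Z[OF _ p l Z] by blast
  define h where "h s = P ** one_ps k0 k1 n s ** matrix_inv P" for s
  have h: "h s *v x = P *v (one_ps k0 k1 n s *v (matrix_inv P *v x))" for s x
    by (simp add: h_def matrix_vector_mul_assoc matrix_mul_assoc)
  have "det (h s) = 1" if "s \<noteq> 0" for s
    using det_one_ps[OF card P(2) that] det_matrix_inv[OF P(1)] by (simp add: h_def det_mul mult.commute)
  then have "\<forall>\<^sub>F s in at 0. det (h s) = 1" by (auto simp: eventually_at_filter)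
  moreover have "\<exists>L. ((\<lambda>s. p (h s *v x)) \<longlongrightarrow> L) (at 0)" for x
    unfolding h using one_ps_limit[OF hom_poly_compose_linear[OF p] P(2) d pP] .
  moreover have "((\<lambda>s. l (h s *v x)) \<longlongrightarrow> 0) (at 0)" for x
    unfolding h lP using one_ps_coordinate_tendsto_zero[OF n] .
  ultimately show ?thesis
    using sl_invariant_vanishes_if_orbit_degenerates[OF F B p l(1) at_neq_bot] by blast
qed

theorem lemma3p6:
  fixes n d :: nat and t :: rat
  assumes "CARD('v::finite) = n + 2"
    and "2 \<le> d" and "d \<le> n + 1"
    and "0 < t" and "t < of_nat d / of_nat (n + 1)"
  shows "(\<forall>(p :: complex^'v \<Rightarrow> complex) l. is_pt d p l \<and> (Z1 p l \<or> Z2 p l)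
            \<longrightarrow> \<not> git_t_semistable d t p l)
       \<and> {(p :: complex^'v \<Rightarrow> complex, l). is_pt d p l \<and> \<not> (Z1 p l \<or> Z2 p l) \<and> git_t_semistable d t p l}
         = {(p, l). is_pt d p l \<and> git_t_semistable d t p l}"
proof -
  have unstable: "\<not> git_t_semistable d t p l"
    if "is_pt d p l" "Z1 p l \<or> Z2 p l" for p l :: "complex^'v \<Rightarrow> complex"
  proof
    assume "git_t_semistable d t p l"
    then obtain a b k F where "0 < b" "0 < k" "F \<in> polyfun" "bihom d (k * a) (k * b) F"
      "sl_invariant d F" "F (p, l) \<noteq> 0"
      unfolding git_t_semistable_def git_semistable_ab_def by blast
    moreover have "1 \<le> n" using assms(2,3) by simp
    ultimately show False
      using sl_invariant_vanishes_on_Z[OF assms(1) _ assms(3)] that unfolding is_pt_def by auto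
  qed
  then show ?thesis by blast
qed

end
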